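(* With the notation of the context, for every $\varepsilon>0$, \[ w_\varepsilon(x)\ge\varepsilon^p\,\chi_{\lambda^{-1}\varepsilon^{2-p}}(x/\varepsilon)\qquad\text{for all }x\in U.\]
   Context: Let $U\subset\mathbb{R}^n$ be a smooth bounded domain, and let $\varphi_0\in C^2(U)\cap C(\overline U)$ be positive somewhere in $U$, negative on $\partial U$, and satisfy $\lambda\le-\Delta\varphi_0\le\lambda^{-1}$ in $U$ for some $\lambda\in(0,1]$. Let $\psi:\mathbb{R}^n\to\mathbb{R}$ be a smooth $\mathbb{Z}^n$-periodic function with $-1\le\psi\le0$, and let $p\in\mathbb{R}$. For $\varepsilon>0$ set $\varphi_\varepsilon(x)=\varphi_0(x)+\varepsilon^p\psi(x/\varepsilon)$ and let $u_\varepsilon$ be the least function $v$ with $\Delta v\le 0$ in $U$, $v\ge\varphi_\varepsilon$ in $U$, $v\ge0$ on $\partial U$. Set $w_\varepsilon=u_\varepsilon-\varphi_0$. For $\mu>0$, let $\chi_\mu$ be the least $\mathbb{Z}^n$-periodic function $v$ on $\mathbb{R}^n$ with $\Delta v\le\mu$ in $\mathbb{R}^n$ and $v\ge\psi$ in $\mathbb{R}^n$. *)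

theory Defs
  imports "HOL-Analysis.Analysis"
begin

fun pd :: "'a::real_normed_vector list \<Rightarrow> ('a \<Rightarrow> real) \<Rightarrow> 'a \<Rightarrow> real" where
  "pd [] f = f"
| "pd (v # vs) f = (\<lambda>x. deriv (\<lambda>t. pd vs f (x + t *\<^sub>R v)) 0)"

definition Ck_on :: "nat \<Rightarrow> 'a::real_normed_vector set \<Rightarrow> ('a \<Rightarrow> real) \<Rightarrow> bool" where
  "Ck_on k S f \<longleftrightarrow>
     (\<forall>vs. length vs \<le> k \<longrightarrow> continuous_on S (pd vs f)) \<and>
     (\<forall>vs. length vs < k \<longrightarrow>
        (\<forall>x\<in>S. \<forall>v. (\<lambda>t. pd vs f (x + t *\<^sub>R v)) differentiable (at 0)))"

definition smooth_on :: "'a::real_normed_vector set \<Rightarrow> ('a \<Rightarrow> real) \<Rightarrow> bool" where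
  "smooth_on S f \<longleftrightarrow> (\<forall>k. Ck_on k S f)"

definition lap :: "('a::euclidean_space \<Rightarrow> real) \<Rightarrow> 'a \<Rightarrow> real" where
  "lap f x = (\<Sum>i\<in>Basis. pd [i, i] f x)"

definition smooth_bounded_domain :: "'a::euclidean_space set \<Rightarrow> bool" where
  "smooth_bounded_domain U \<longleftrightarrow> open U \<and> bounded U \<and> connected U \<and> U \<noteq> {} \<and>
     (\<forall>z\<in>frontier U. \<exists>r>0. \<exists>g. smooth_on (ball z r) g \<and>
        (\<exists>v. pd [v] g z \<noteq> 0) \<and> U \<inter> ball z r = {x\<in>ball z r. g x < 0})"

definition int_lattice :: "'a::euclidean_space set" where
  "int_lattice = {k. \<forall>i\<in>Basis. k \<bullet> i \<in> \<int>}"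

definition Zn_periodic :: "('a::euclidean_space \<Rightarrow> real) \<Rightarrow> bool" where
  "Zn_periodic f \<longleftrightarrow> (\<forall>x. \<forall>k\<in>int_lattice. f (x + k) = f x)"

text \<open>Viscosity sense of "Delta v <= mu in S" for a continuous v: whenever a C^2
  function touches v from below at x0, its Laplacian at x0 is at most mu.\<close>
definition lap_le_visc :: "'a::euclidean_space set \<Rightarrow> real \<Rightarrow> ('a \<Rightarrow> real) \<Rightarrow> bool" where
  "lap_le_visc S \<mu> v \<longleftrightarrow>
     (\<forall>x0\<in>S. \<forall>r>0. \<forall>\<phi>. ball x0 r \<subseteq> S \<longrightarrow> Ck_on 2 (ball x0 r) \<phi> \<longrightarrow>
        \<phi> x0 = v x0 \<longrightarrow> (\<forall>x\<in>ball x0 r. \<phi> x \<le> v x) \<longrightarrow> lap \<phi> x0 \<le> \<mu>)"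

definition obst_class :: "'a::euclidean_space set \<Rightarrow> ('a \<Rightarrow> real) \<Rightarrow> ('a \<Rightarrow> real) set" where
  "obst_class U \<phi> = {v. continuous_on (closure U) v \<and> lap_le_visc U 0 v \<and>
      (\<forall>x\<in>U. \<phi> x \<le> v x) \<and> (\<forall>x\<in>frontier U. 0 \<le> v x)}"

definition is_least_on :: "'a set \<Rightarrow> ('a \<Rightarrow> real) set \<Rightarrow> ('a \<Rightarrow> real) \<Rightarrow> bool" where
  "is_least_on D C u \<longleftrightarrow> u \<in> C \<and> (\<forall>v\<in>C. \<forall>x\<in>D. u x \<le> v x)"

definition cell_class :: "real \<Rightarrow> ('a::euclidean_space \<Rightarrow> real) \<Rightarrow> ('a \<Rightarrow> real) set" where
  "cell_class \<mu> \<psi> = {v. continuous_on UNIV v \<and> Zn_periodic v \<and> lap_le_visc UNIV \<mu> v \<and>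
      (\<forall>x. \<psi> x \<le> v x)}"

end

theory Submission
  imports Defs
begin

text \<open>The rescaled gap \<open>w y = \<epsilon> powr (-p) * (u (\<epsilon> *\<^sub>R y) - \<phi>0 (\<epsilon> *\<^sub>R y))\<close> is a viscosity
  supersolution of \<open>\<Delta>w \<le> \<epsilon> powr (2 - p) / lam\<close> on \<open>U / \<epsilon>\<close>, because \<open>\<Delta>u \<le> 0\<close> and
  \<open>-\<Delta>\<phi>0 \<le> 1 / lam\<close>; it lies above \<open>\<psi>\<close> there and is positive on the boundary, where
  \<open>chi \<le> 0\<close>. Replacing \<open>chi\<close> by \<open>min w chi\<close> on \<open>U / \<epsilon>\<close> keeps a continuous supersolution
  above \<open>\<psi>\<close>, and the infimum of its lattice translates is moreover periodic (only finitely
  many translates meet the bounded set where it differs from \<open>chi\<close>). This is an admissible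
  competitor for \<open>chi\<close>, so minimality of \<open>chi\<close> gives \<open>chi \<le> w\<close> on \<open>U / \<epsilon>\<close>.\<close>

lemma eventually_on_line:
  fixes x v :: "'a::real_normed_vector"
  assumes "open S" "x \<in> S"
  shows "\<forall>\<^sub>F t in nhds 0. x + t *\<^sub>R v \<in> S"
proof -
  have "((\<lambda>t::real. x + t *\<^sub>R v) \<longlongrightarrow> x + 0 *\<^sub>R v) (nhds 0)"
    by (intro tendsto_intros filterlim_ident)
  then show ?thesis using assms by (auto dest!: topological_tendstoD)
qed

lemma line_derivative_cong:
  fixes x v :: "'a::real_normed_vector"
  assumes "open S" "x \<in> S" "\<And>y. y \<in> S \<Longrightarrow> F y = G y"
  shows "((\<lambda>t. F (x + t *\<^sub>R v)) has_real_derivative D) (at 0) \<longleftrightarrow>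
         ((\<lambda>t. G (x + t *\<^sub>R v)) has_real_derivative D) (at 0)"
  using eventually_on_line[OF assms(1,2), of v]
  by (intro DERIV_cong_ev) (auto elim!: eventually_mono simp: assms(3))

lemma Ck_on_line_derivative:
  assumes "Ck_on k S f" "length vs < k" "x \<in> S"
  shows "((\<lambda>t. pd vs f (x + t *\<^sub>R v)) has_real_derivative pd (v # vs) f x) (at 0)"
  using assms by (simp add: Ck_on_def DERIV_deriv_iff_real_differentiable)

lemma Ck_on_subset: "Ck_on k S f \<Longrightarrow> T \<subseteq> S \<Longrightarrow> Ck_on k T f"
  unfolding Ck_on_def by (auto intro: continuous_on_subset)

lemma open_affine_preimage:
  fixes c :: "'a::real_normed_vector"
  shows "open S \<Longrightarrow> open {x. b *\<^sub>R x + c \<in> S}"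
  by (intro open_vimage[unfolded vimage_def] continuous_intros)

lemma pd_affine_line_derivative:
  fixes f :: "'a::real_normed_vector \<Rightarrow> real"
  assumes S: "open S" and C: "Ck_on k S f" and vs: "length vs < k" and x: "b *\<^sub>R x + c \<in> S"
    and pd_vs: "\<And>y. b *\<^sub>R y + c \<in> S \<Longrightarrow>
       pd vs (\<lambda>x. a * f (b *\<^sub>R x + c)) y = a * b ^ length vs * pd vs f (b *\<^sub>R y + c)"
  shows "((\<lambda>t. pd vs (\<lambda>x. a * f (b *\<^sub>R x + c)) (x + t *\<^sub>R v)) has_real_derivative
           a * b ^ Suc (length vs) * pd (v # vs) f (b *\<^sub>R x + c)) (at 0)"
proof -
  define h where "h = (\<lambda>s. pd vs f ((b *\<^sub>R x + c) + s *\<^sub>R v))"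
  have "(h has_real_derivative pd (v # vs) f (b *\<^sub>R x + c)) (at (b * 0))"
    unfolding h_def using Ck_on_line_derivative[OF C vs x] by simp
  then have "((\<lambda>t. h (b * t)) has_real_derivative pd (v # vs) f (b *\<^sub>R x + c) * b) (at 0)"
    by (rule DERIV_chain2) (auto intro!: derivative_eq_intros)
  then have "((\<lambda>t. a * b ^ length vs * h (b * t)) has_real_derivative
               a * b ^ Suc (length vs) * pd (v # vs) f (b *\<^sub>R x + c)) (at 0)"
    by (auto dest: DERIV_cmult[where c="a * b ^ length vs"] simp: ac_simps)
  moreover have "a * b ^ length vs * h (b * t) = a * b ^ length vs * pd vs f (b *\<^sub>R (x + t *\<^sub>R v) + c)"
    for t by (simp add: h_def algebra_simps)
  ultimately show ?thesis
    using line_derivative_cong[OF open_affine_preimage[OF S], of x] x pd_vs by simp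
qed

lemma pd_affine:
  fixes f :: "'a::real_normed_vector \<Rightarrow> real"
  assumes S: "open S" and C: "Ck_on k S f"
  shows "length vs \<le> k \<Longrightarrow> b *\<^sub>R x + c \<in> S \<Longrightarrow>
    pd vs (\<lambda>x. a * f (b *\<^sub>R x + c)) x = a * b ^ length vs * pd vs f (b *\<^sub>R x + c)"
proof (induction vs arbitrary: x)
  case (Cons v vs)
  then show ?case
    using pd_affine_line_derivative[OF S C, of vs b x c a v] by (simp add: DERIV_imp_deriv)
qed simp

lemma Ck_on_affine:
  fixes f :: "'a::real_normed_vector \<Rightarrow> real"
  assumes S: "open S" and C: "Ck_on k S f"
  shows "Ck_on k {x. b *\<^sub>R x + c \<in> S} (\<lambda>x. a * f (b *\<^sub>R x + c))"
  unfolding Ck_on_def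
proof (intro conjI allI impI ballI)
  fix vs :: "'a list" assume vs: "length vs \<le> k"
  have "continuous_on {x. b *\<^sub>R x + c \<in> S} (\<lambda>x. pd vs f (b *\<^sub>R x + c))"
    by (rule continuous_on_compose2[of S "pd vs f"])
       (use C vs in \<open>auto simp: Ck_on_def intro!: continuous_intros\<close>)
  then have "continuous_on {x. b *\<^sub>R x + c \<in> S} (\<lambda>x. a * b ^ length vs * pd vs f (b *\<^sub>R x + c))"
    by (intro continuous_intros)
  then show "continuous_on {x. b *\<^sub>R x + c \<in> S} (pd vs (\<lambda>x. a * f (b *\<^sub>R x + c)))"
    by (rule continuous_on_cong[THEN iffD1, rotated -1]) (use pd_affine[OF S C vs] in auto)
next
  fix vs :: "'a list" and x v assume "length vs < k" "x \<in> {x. b *\<^sub>R x + c \<in> S}"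
  then show "(\<lambda>t. pd vs (\<lambda>x. a * f (b *\<^sub>R x + c)) (x + t *\<^sub>R v)) differentiable at 0"
    using pd_affine_line_derivative[OF S C, of vs b x c a v] pd_affine[OF S C]
    by (auto simp: real_differentiable_def)
qed

lemma pd_add_line_derivative:
  fixes f g :: "'a::real_normed_vector \<Rightarrow> real"
  assumes S: "open S" and Cf: "Ck_on k S f" and Cg: "Ck_on k S g"
    and vs: "length vs < k" and x: "x \<in> S"
    and pd_vs: "\<And>y. y \<in> S \<Longrightarrow> pd vs (\<lambda>x. f x + g x) y = pd vs f y + pd vs g y"
  shows "((\<lambda>t. pd vs (\<lambda>x. f x + g x) (x + t *\<^sub>R v)) has_real_derivative
           pd (v # vs) f x + pd (v # vs) g x) (at 0)"
proof -
  have "((\<lambda>t. pd vs f (x + t *\<^sub>R v) + pd vs g (x + t *\<^sub>R v)) has_real_derivative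
          pd (v # vs) f x + pd (v # vs) g x) (at 0)"
    using Ck_on_line_derivative[OF Cf vs x] Ck_on_line_derivative[OF Cg vs x] by (rule DERIV_add)
  then show ?thesis
    using line_derivative_cong[OF S x, where F="pd vs (\<lambda>x. f x + g x)"
        and G="\<lambda>y. pd vs f y + pd vs g y"] pd_vs by simp
qed

lemma pd_add:
  fixes f g :: "'a::real_normed_vector \<Rightarrow> real"
  assumes S: "open S" and Cf: "Ck_on k S f" and Cg: "Ck_on k S g"
  shows "length vs \<le> k \<Longrightarrow> x \<in> S \<Longrightarrow> pd vs (\<lambda>x. f x + g x) x = pd vs f x + pd vs g x"
proof (induction vs arbitrary: x)
  case (Cons v vs)
  then show ?case
    using pd_add_line_derivative[OF S Cf Cg, of vs x v] by (simp add: DERIV_imp_deriv)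
qed simp

lemma Ck_on_add:
  fixes f g :: "'a::real_normed_vector \<Rightarrow> real"
  assumes S: "open S" and Cf: "Ck_on k S f" and Cg: "Ck_on k S g"
  shows "Ck_on k S (\<lambda>x. f x + g x)"
  unfolding Ck_on_def
proof (intro conjI allI impI ballI)
  fix vs :: "'a list" assume vs: "length vs \<le> k"
  have "continuous_on S (\<lambda>x. pd vs f x + pd vs g x)"
    using Cf Cg vs unfolding Ck_on_def by (simp add: continuous_on_add)
  then show "continuous_on S (pd vs (\<lambda>x. f x + g x))"
    by (rule continuous_on_cong[THEN iffD1, rotated -1]) (use pd_add[OF S Cf Cg vs] in auto)
next
  fix vs :: "'a list" and x v assume "length vs < k" "x \<in> S"
  then show "(\<lambda>t. pd vs (\<lambda>x. f x + g x) (x + t *\<^sub>R v)) differentiable at 0"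
    using pd_add_line_derivative[OF S Cf Cg, of vs x v] pd_add[OF S Cf Cg]
    by (auto simp: real_differentiable_def)
qed

lemma lap_affine:
  fixes f :: "'a::euclidean_space \<Rightarrow> real"
  assumes "open S" "Ck_on 2 S f" "b *\<^sub>R x + c \<in> S"
  shows "lap (\<lambda>x. a * f (b *\<^sub>R x + c)) x = a * b\<^sup>2 * lap f (b *\<^sub>R x + c)"
  unfolding lap_def sum_distrib_left
proof (rule sum.cong[OF refl])
  fix i :: 'a
  show "pd [i, i] (\<lambda>x. a * f (b *\<^sub>R x + c)) x = a * b\<^sup>2 * pd [i, i] f (b *\<^sub>R x + c)"
    using pd_affine[OF assms(1,2) _ assms(3), of "[i, i]"] by (simp only: list.size power2_eq_square) simp
qed

lemma lap_add:
  fixes f g :: "'a::euclidean_space \<Rightarrow> real"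
  assumes "open S" "Ck_on 2 S f" "Ck_on 2 S g" "x \<in> S"
  shows "lap (\<lambda>x. f x + g x) x = lap f x + lap g x"
  unfolding lap_def sum.distrib[symmetric]
  by (rule sum.cong[OF refl], rule pd_add[OF assms(1-3) _ assms(4)]) simp

lemma pd_twice_nonpos_at_local_max:
  fixes \<phi> :: "'a::euclidean_space \<Rightarrow> real"
  assumes C: "Ck_on 2 (ball x0 r) \<phi>" and r: "0 < r" and i: "norm i = 1"
    and max: "\<forall>x\<in>ball x0 r. \<phi> x \<le> \<phi> x0"
  shows "pd [i, i] \<phi> x0 \<le> 0"
proof (rule ccontr)
  assume pos: "\<not> pd [i, i] \<phi> x0 \<le> 0"
  define g where "g = (\<lambda>t. \<phi> (x0 + t *\<^sub>R i))"
  define G where "G = (\<lambda>t. pd [i] \<phi> (x0 + t *\<^sub>R i))"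
  have on_line: "x0 + t *\<^sub>R i \<in> ball x0 r" if "\<bar>t\<bar> < r" for t
    using that i by (simp add: dist_norm)
  have g_deriv: "(g has_real_derivative G t) (at t)" if t: "\<bar>t\<bar> < r" for t
  proof -
    have "((\<lambda>s. \<phi> (x0 + t *\<^sub>R i + s *\<^sub>R i)) has_real_derivative G t) (at 0)"
      using Ck_on_line_derivative[OF C _ on_line[OF t], of "[]" i] by (simp add: G_def)
    moreover have "(\<lambda>s. \<phi> (x0 + t *\<^sub>R i + s *\<^sub>R i)) = (\<lambda>s. g (s + t))"
      by (auto simp: g_def algebra_simps)
    ultimately show ?thesis using DERIV_shift[of g "G t" 0 t] by simp
  qed
  have G_deriv: "(G has_real_derivative pd [i, i] \<phi> x0) (at 0)"
    using Ck_on_line_derivative[OF C _ centre_in_ball[THEN iffD2, OF r], of "[i]" i]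
    by (simp add: G_def)
  have G0: "G 0 = 0"
    by (rule DERIV_local_max[OF g_deriv[of 0] r]) (use r max on_line in \<open>auto simp: g_def\<close>)
  obtain d where d: "d > 0" "\<forall>h>0. h < d \<longrightarrow> G 0 < G (0 + h)"
    using DERIV_pos_inc_right[OF G_deriv] pos by auto
  define t where "t = min d r / 2"
  have t: "0 < t" "t < d" "t < r" using d r by (auto simp: t_def)
  obtain z where z: "0 < z" "z < t" "g t - g 0 = (t - 0) * G z"
    using MVT2[of 0 t g G] g_deriv t by force
  have "g t - g 0 > 0" using d z t G0 by simp
  moreover have "g t \<le> g 0" using max on_line[of t] t by (simp add: g_def)
  ultimately show False by simp
qed

lemma lap_nonpos_at_local_max:
  fixes \<phi> :: "'a::euclidean_space \<Rightarrow> real"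
  assumes "Ck_on 2 (ball x0 r) \<phi>" "0 < r" "\<forall>x\<in>ball x0 r. \<phi> x \<le> \<phi> x0"
  shows "lap \<phi> x0 \<le> 0"
  unfolding lap_def
  by (rule sum_nonpos) (use pd_twice_nonpos_at_local_max[OF assms(1,2) _ assms(3)] in auto)

lemma lap_le_visc_const: "0 \<le> \<mu> \<Longrightarrow> lap_le_visc S \<mu> (\<lambda>_. c)"
  unfolding lap_le_visc_def
  by (intro ballI allI impI order.trans[OF lap_nonpos_at_local_max]) auto

lemma lap_le_visc_diff_C2:
  fixes u f :: "'a::euclidean_space \<Rightarrow> real"
  assumes u: "lap_le_visc S \<mu> u" and f: "Ck_on 2 S f" and bound: "\<forall>x\<in>S. - lap f x \<le> M"
  shows "lap_le_visc S (\<mu> + M) (\<lambda>x. u x - f x)"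
  unfolding lap_le_visc_def
proof (intro ballI allI impI)
  fix x0 r \<phi>
  assume x0: "x0 \<in> S" and r: "0 < r" and ball: "ball x0 r \<subseteq> S" and C: "Ck_on 2 (ball x0 r) \<phi>"
    and touch: "\<phi> x0 = u x0 - f x0" and below: "\<forall>x\<in>ball x0 r. \<phi> x \<le> u x - f x"
  have Cf: "Ck_on 2 (ball x0 r) f" using Ck_on_subset[OF f ball] .
  have "lap (\<lambda>x. \<phi> x + f x) x0 \<le> \<mu>"
    using u[unfolded lap_le_visc_def] x0 r ball Ck_on_add[OF open_ball C Cf] touch below by force
  moreover have "lap (\<lambda>x. \<phi> x + f x) x0 = lap \<phi> x0 + lap f x0"
    using lap_add[OF open_ball C Cf] r by simp
  ultimately show "lap \<phi> x0 \<le> \<mu> + M" using bound x0 by force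
qed

lemma lap_le_visc_affine:
  fixes v :: "'a::euclidean_space \<Rightarrow> real"
  assumes v: "lap_le_visc S \<mu> v" and a: "0 < a" and e: "e \<noteq> 0"
  shows "lap_le_visc {y. e *\<^sub>R y + c \<in> S} (a * e\<^sup>2 * \<mu>) (\<lambda>y. a * v (e *\<^sub>R y + c))"
  unfolding lap_le_visc_def
proof (intro ballI allI impI)
  fix y0 r \<phi>
  assume y0: "y0 \<in> {y. e *\<^sub>R y + c \<in> S}" and r: "0 < r"
    and ball: "ball y0 r \<subseteq> {y. e *\<^sub>R y + c \<in> S}" and C: "Ck_on 2 (ball y0 r) \<phi>"
    and touch: "\<phi> y0 = a * v (e *\<^sub>R y0 + c)" and below: "\<forall>y\<in>ball y0 r. \<phi> y \<le> a * v (e *\<^sub>R y + c)"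
  define x0 where "x0 = e *\<^sub>R y0 + c"
  define \<Phi> where "\<Phi> = (\<lambda>x. (1 / a) * \<phi> ((1 / e) *\<^sub>R x + - ((1 / e) *\<^sub>R c)))"
  have inv: "(1 / e) *\<^sub>R x + - ((1 / e) *\<^sub>R c) \<in> ball y0 r" "e *\<^sub>R ((1 / e) *\<^sub>R x + - ((1 / e) *\<^sub>R c)) + c = x"
    if "x \<in> ball x0 (\<bar>e\<bar> * r)" for x
  proof -
    have "(1 / e) *\<^sub>R x + - ((1 / e) *\<^sub>R c) - y0 = (1 / e) *\<^sub>R (x - x0)"
      using e by (simp add: x0_def algebra_simps)
    then have "dist y0 ((1 / e) *\<^sub>R x + - ((1 / e) *\<^sub>R c)) = dist x0 x / \<bar>e\<bar>"
      by (simp add: dist_norm norm_minus_commute[of y0] norm_minus_commute[of x0] divide_inverse)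
    moreover have "dist x0 x / \<bar>e\<bar> < r"
      using that e by (simp add: pos_divide_less_eq mult.commute)
    ultimately show "(1 / e) *\<^sub>R x + - ((1 / e) *\<^sub>R c) \<in> ball y0 r"
      by simp
    show "e *\<^sub>R ((1 / e) *\<^sub>R x + - ((1 / e) *\<^sub>R c)) + c = x"
      using e by (simp add: algebra_simps)
  qed
  have ball_x0: "ball x0 (\<bar>e\<bar> * r) \<subseteq> S"
    using inv ball by (metis mem_Collect_eq subsetI subsetD)
  have "lap \<Phi> x0 \<le> \<mu>"
  proof (rule v[unfolded lap_le_visc_def, rule_format, of x0 "\<bar>e\<bar> * r"])
    show "x0 \<in> S" using y0 by (simp add: x0_def)
    show "0 < \<bar>e\<bar> * r" using e r by simp
    show "ball x0 (\<bar>e\<bar> * r) \<subseteq> S" by (rule ball_x0)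
    show "Ck_on 2 (ball x0 (\<bar>e\<bar> * r)) \<Phi>"
      unfolding \<Phi>_def by (rule Ck_on_subset[OF Ck_on_affine[OF open_ball C]]) (use inv in auto)
    show "\<Phi> x0 = v x0"
      using touch a e by (simp add: \<Phi>_def x0_def algebra_simps)
    show "\<Phi> x \<le> v x" if "x \<in> ball x0 (\<bar>e\<bar> * r)" for x
    proof -
      have "\<phi> ((1 / e) *\<^sub>R x + - ((1 / e) *\<^sub>R c)) \<le> a * v x"
        using below[rule_format, OF inv(1)[OF that]] inv(2)[OF that] by simp
      then have "(1 / a) * \<phi> ((1 / e) *\<^sub>R x + - ((1 / e) *\<^sub>R c)) \<le> (1 / a) * (a * v x)"
        using a by (intro mult_left_mono) auto
      then show ?thesis using a by (simp add: \<Phi>_def)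
    qed
  qed
  moreover have "lap \<Phi> x0 = (1 / a) * (1 / e)\<^sup>2 * lap \<phi> y0"
  proof -
    have "(1 / e) *\<^sub>R x0 + - ((1 / e) *\<^sub>R c) = y0" using e by (simp add: x0_def scaleR_add_right)
    then show ?thesis
      unfolding \<Phi>_def using r
        lap_affine[OF open_ball C, where b="1 / e" and x=x0 and c="- ((1 / e) *\<^sub>R c)" and a="1 / a"]
      by simp
  qed
  ultimately show "lap \<phi> y0 \<le> a * e\<^sup>2 * \<mu>"
    using a e by (simp add: field_simps)
qed

lemma lap_le_visc_glue_min:
  assumes w: "lap_le_visc S \<mu> w" and T: "open T" "T \<subseteq> S" and v: "lap_le_visc T \<mu> v"
  shows "lap_le_visc S \<mu> (\<lambda>y. if y \<in> T then min (v y) (w y) else w y)"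
  unfolding lap_le_visc_def
proof (intro ballI allI impI)
  fix x0 r \<phi>
  assume x0: "x0 \<in> S" and r: "0 < r" and ball: "ball x0 r \<subseteq> S" and C: "Ck_on 2 (ball x0 r) \<phi>"
    and touch: "\<phi> x0 = (if x0 \<in> T then min (v x0) (w x0) else w x0)"
    and below: "\<forall>x\<in>ball x0 r. \<phi> x \<le> (if x \<in> T then min (v x) (w x) else w x)"
  have below_w: "\<forall>x\<in>ball x0 r. \<phi> x \<le> w x" using below by (auto split: if_splits)
  show "lap \<phi> x0 \<le> \<mu>"
  proof (cases "\<phi> x0 = w x0")
    case True
    then show ?thesis using w[unfolded lap_le_visc_def] x0 r ball C below_w by blast
  next
    case False
    then have x0T: "x0 \<in> T" and vx0: "\<phi> x0 = v x0"
      using touch by (auto simp: min_def split: if_splits)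
    obtain r0 where r0: "0 < r0" "ball x0 r0 \<subseteq> T"
      using T(1) x0T open_contains_ball by blast
    define r' where "r' = min r r0"
    have r': "0 < r'" "ball x0 r' \<subseteq> ball x0 r" "ball x0 r' \<subseteq> T"
      using r r0 by (auto simp: r'_def)
    have "\<forall>x\<in>ball x0 r'. \<phi> x \<le> v x" using below r' by (auto split: if_splits)
    then show ?thesis
      using v[unfolded lap_le_visc_def] x0T r' vx0 Ck_on_subset[OF C r'(2)] by blast
  qed
qed

lemma continuous_on_glue_min:
  fixes v w :: "'a::topological_space \<Rightarrow> real"
  assumes C: "closed C" "T \<subseteq> C" and T: "open T" and v: "continuous_on C v"
    and w: "continuous_on UNIV w" and le: "\<And>y. y \<in> C - T \<Longrightarrow> w y \<le> v y"
  shows "continuous_on UNIV (\<lambda>y. if y \<in> T then min (v y) (w y) else w y)"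
proof -
  have "continuous_on (C \<union> - T) (\<lambda>y. if y \<in> T then min (v y) (w y) else w y)"
    using le by (intro continuous_on_cases continuous_on_min v continuous_on_subset[OF w])
      (auto simp: C(1) T closed_Compl)
  moreover have "C \<union> - T = UNIV" using C(2) by blast
  ultimately show ?thesis by simp
qed

lemma zero_in_int_lattice: "0 \<in> int_lattice"
  by (simp add: int_lattice_def)

lemma int_lattice_add: "a \<in> int_lattice \<Longrightarrow> b \<in> int_lattice \<Longrightarrow> a + b \<in> int_lattice"
  by (simp add: int_lattice_def inner_add_left)

lemma int_lattice_diff: "a \<in> int_lattice \<Longrightarrow> b \<in> int_lattice \<Longrightarrow> a - b \<in> int_lattice"
  by (simp add: int_lattice_def inner_diff_left)

lemma int_lattice_scaleR_Basis: "i \<in> Basis \<Longrightarrow> of_nat n *\<^sub>R i \<in> int_lattice"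
  by (auto simp: int_lattice_def inner_Basis)

lemma finite_int_lattice_cball: "finite {k::'a::euclidean_space. k \<in> int_lattice \<and> norm k \<le> R}"
proof -
  define N where "N = \<lceil>R\<rceil>"
  have "{k::'a. k \<in> int_lattice \<and> norm k \<le> R} \<subseteq>
     (\<lambda>f. \<Sum>i\<in>Basis. of_int (f i) *\<^sub>R i) ` (PiE Basis (\<lambda>_. {-N..N}))"
  proof
    fix k :: 'a assume k: "k \<in> {k. k \<in> int_lattice \<and> norm k \<le> R}"
    define f where "f = restrict (\<lambda>i. \<lfloor>k \<bullet> i\<rfloor>) Basis"
    have ki: "k \<bullet> i = of_int \<lfloor>k \<bullet> i\<rfloor>" if "i \<in> Basis" for i
      using k that unfolding int_lattice_def by (auto elim!: Ints_cases)
    have "\<bar>\<lfloor>k \<bullet> i\<rfloor>\<bar> \<le> N" if "i \<in> Basis" for i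
    proof -
      have "\<bar>k \<bullet> i\<bar> \<le> R" using Basis_le_norm[OF that, of k] k by simp
      then show ?thesis using ki[OF that] unfolding N_def by linarith
    qed
    then have "f \<in> PiE Basis (\<lambda>_. {-N..N})" by (force simp: f_def abs_le_iff)
    moreover have "k = (\<Sum>i\<in>Basis. of_int (f i) *\<^sub>R i)"
      using euclidean_representation[of k] ki by (simp add: f_def)
    ultimately show "k \<in> (\<lambda>f. \<Sum>i\<in>Basis. of_int (f i) *\<^sub>R i) ` (PiE Basis (\<lambda>_. {-N..N}))"
      by blast
  qed
  moreover have "finite (PiE Basis (\<lambda>_::'a. {-N..N}))"
    by (intro finite_PiE) auto
  ultimately show ?thesis using finite_subset by blast
qed

definition lattice_inf :: "('a::euclidean_space \<Rightarrow> real) \<Rightarrow> 'a \<Rightarrow> real" where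
  "lattice_inf W y = Inf ((\<lambda>k. W (y + k)) ` int_lattice)"

lemma Zn_periodic_lattice_inf: "Zn_periodic (lattice_inf W)"
  unfolding Zn_periodic_def
proof (intro allI ballI)
  fix y j :: 'a assume j: "j \<in> int_lattice"
  have "(\<lambda>k. W (y + j + k)) ` int_lattice = (\<lambda>k. W (y + k)) ` ((+) j ` int_lattice)"
    by (simp add: image_image add.assoc)
  also have "(+) j ` int_lattice = int_lattice"
  proof
    show "(+) j ` int_lattice \<subseteq> int_lattice" using j int_lattice_add by blast
    show "int_lattice \<subseteq> (+) j ` int_lattice"
    proof
      fix k :: 'a assume "k \<in> int_lattice"
      then have "k - j \<in> int_lattice" using j by (rule int_lattice_diff)
      then show "k \<in> (+) j ` int_lattice" by (intro image_eqI[of _ _ "k - j"]) auto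
    qed
  qed
  finally show "lattice_inf W (y + j) = lattice_inf W y" by (simp add: lattice_inf_def)
qed

text \<open>Near any point, only finitely many lattice translates see \<open>W\<close> differ from \<open>g\<close>,
  and all the others give the common value \<open>g y\<close>, attained at the far point \<open>kf\<close>; so the
  infimum over the lattice is a minimum over a finite set that does not depend on \<open>y\<close>.\<close>
lemma lattice_orbit_locally_finite:
  fixes W g :: "'a::euclidean_space \<Rightarrow> real"
  assumes g: "Zn_periodic g" and out: "\<And>y. R < norm y \<Longrightarrow> W y = g y"
  obtains K :: "'a set" where "finite K" "K \<noteq> {}" "K \<subseteq> int_lattice"
    "\<And>y. y \<in> ball z 1 \<Longrightarrow> (\<lambda>k. W (y + k)) ` int_lattice = (\<lambda>k. W (y + k)) ` K"
proof -
  define \<rho> where "\<rho> = R + norm z + 1"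
  obtain i :: 'a where i: "i \<in> Basis" using nonempty_Basis by blast
  define kf where "kf = of_nat (nat \<lceil>\<rho>\<rceil> + 1) *\<^sub>R i"
  define K where "K = insert kf {k. k \<in> int_lattice \<and> norm k \<le> \<rho>}"
  have kf: "kf \<in> int_lattice" unfolding kf_def by (rule int_lattice_scaleR_Basis[OF i])
  have far: "R < norm (y + k)" if "y \<in> ball z 1" "\<rho> < norm k" for y k
  proof -
    have "norm y < norm z + 1"
      using that(1) norm_triangle_ineq2[of y z] by (simp add: dist_norm norm_minus_commute)
    then show ?thesis using that(2) norm_triangle_ineq2[of k "- y"] by (simp add: \<rho>_def add.commute)
  qed
  have kf_far: "\<rho> < norm kf"
    using i by (simp add: kf_def) linarith
  show thesis
  proof (rule that[of K])
    show "finite K" by (simp add: K_def finite_int_lattice_cball)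
    show "K \<noteq> {}" by (simp add: K_def)
    show "K \<subseteq> int_lattice" using kf by (auto simp: K_def)
  next
    fix y assume y: "y \<in> ball z 1"
    show "(\<lambda>k. W (y + k)) ` int_lattice = (\<lambda>k. W (y + k)) ` K"
    proof
      show "(\<lambda>k. W (y + k)) ` K \<subseteq> (\<lambda>k. W (y + k)) ` int_lattice"
        using kf by (auto simp: K_def)
      show "(\<lambda>k. W (y + k)) ` int_lattice \<subseteq> (\<lambda>k. W (y + k)) ` K"
      proof (intro image_subsetI)
        fix k :: 'a assume k: "k \<in> int_lattice"
        show "W (y + k) \<in> (\<lambda>k. W (y + k)) ` K"
        proof (cases "norm k \<le> \<rho>")
          case True then show ?thesis using k by (auto simp: K_def)
        next
          case False
          have "W (y + k) = g y"
            using out[OF far[OF y]] False g k by (simp add: Zn_periodic_def)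
          also have "\<dots> = W (y + kf)"
            using out[OF far[OF y kf_far]] g kf by (simp add: Zn_periodic_def)
          finally show ?thesis by (auto simp: K_def)
        qed
      qed
    qed
  qed
qed

lemma continuous_on_Min_image:
  fixes f :: "'b \<Rightarrow> 'a::topological_space \<Rightarrow> real"
  assumes "finite K" "K \<noteq> {}" "\<And>k. k \<in> K \<Longrightarrow> continuous_on A (f k)"
  shows "continuous_on A (\<lambda>y. Min ((\<lambda>k. f k y) ` K))"
  using assms
proof (induction K rule: finite_ne_induct)
  case (insert k K)
  then have "(\<lambda>y. Min ((\<lambda>k. f k y) ` insert k K)) = (\<lambda>y. min (f k y) (Min ((\<lambda>k. f k y) ` K)))"
    by simp
  then show ?case using insert by (simp add: continuous_on_min)
qed simp

context
  fixes W g :: "'a::euclidean_space \<Rightarrow> real" and R :: real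
  assumes g: "Zn_periodic g" and out: "\<And>y. R < norm y \<Longrightarrow> W y = g y"
begin

lemma finite_lattice_orbit: "finite ((\<lambda>k. W (y + k)) ` int_lattice)" for y :: 'a
proof -
  obtain K :: "'a set" where "finite K"
    "(\<lambda>k. W (y + k)) ` int_lattice = (\<lambda>k. W (y + k)) ` K"
    using lattice_orbit_locally_finite[OF g out, where z=y] by (metis centre_in_ball zero_less_one)
  then show ?thesis by simp
qed

lemma lattice_inf_le: "k \<in> int_lattice \<Longrightarrow> lattice_inf W y \<le> W (y + k)"
  unfolding lattice_inf_def
  by (rule cInf_lower) (auto intro: bdd_below_finite finite_lattice_orbit)

lemma lattice_inf_attained: "\<exists>k\<in>int_lattice. lattice_inf W y = W (y + k)"
proof -
  have "lattice_inf W y \<in> (\<lambda>k. W (y + k)) ` int_lattice"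
    unfolding lattice_inf_def using finite_lattice_orbit[of y] zero_in_int_lattice
    by (subst cInf_eq_Min) (auto intro!: Min_in)
  then show ?thesis by auto
qed

lemma continuous_on_lattice_inf:
  assumes W: "continuous_on UNIV W"
  shows "continuous_on UNIV (lattice_inf W)"
proof (rule continuous_at_imp_continuous_on, rule ballI)
  fix y0 :: 'a
  obtain K where K: "finite K" "K \<noteq> {}" "K \<subseteq> int_lattice"
    and orbit: "\<And>y. y \<in> ball y0 1 \<Longrightarrow> (\<lambda>k. W (y + k)) ` int_lattice = (\<lambda>k. W (y + k)) ` K"
    using lattice_orbit_locally_finite[OF g out] by blast
  have "continuous_on (ball y0 1) (\<lambda>y. Min ((\<lambda>k. W (y + k)) ` K))"
    using K(1,2) by (rule continuous_on_Min_image)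
      (rule continuous_on_compose2[OF W continuous_on_add[OF continuous_on_id continuous_on_const]]; simp)
  then have "continuous_on (ball y0 1) (lattice_inf W)"
    by (rule continuous_on_eq) (use orbit K(1,2) in \<open>simp add: lattice_inf_def cInf_eq_Min\<close>)
  then show "isCont (lattice_inf W) y0"
    by (simp add: continuous_on_eq_continuous_at)
qed

lemma lap_le_visc_lattice_inf:
  assumes W: "lap_le_visc UNIV \<mu> W"
  shows "lap_le_visc UNIV \<mu> (lattice_inf W)"
  unfolding lap_le_visc_def
proof (intro ballI allI impI)
  fix x0 r \<phi>
  assume r: "0 < r" and C: "Ck_on 2 (ball x0 r) \<phi>" and touch: "\<phi> x0 = lattice_inf W x0"
    and below: "\<forall>x\<in>ball x0 r. \<phi> x \<le> lattice_inf W x"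
  obtain k where k: "k \<in> int_lattice" "lattice_inf W x0 = W (x0 + k)"
    using lattice_inf_attained by blast
  have shifted: "lap_le_visc UNIV \<mu> (\<lambda>y. W (y + k))"
    using lap_le_visc_affine[OF W, of 1 1 k] by simp
  have below_shifted: "\<forall>x\<in>ball x0 r. \<phi> x \<le> W (x + k)"
    using below lattice_inf_le[OF k(1)] order_trans by blast
  show "lap \<phi> x0 \<le> \<mu>"
    by (rule shifted[unfolded lap_le_visc_def, rule_format, OF _ r _ C])
      (use touch k(2) below_shifted in auto)
qed

end

lemma cell_least_nonpos:
  assumes chi: "is_least_on UNIV (cell_class \<mu> \<psi>) chi" and mu: "0 \<le> \<mu>"
    and psi: "\<forall>x. \<psi> x \<le> 0"
  shows "chi x \<le> 0"
proof -
  have "(\<lambda>_. 0) \<in> cell_class \<mu> \<psi>"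
    using lap_le_visc_const[OF mu] psi by (simp add: cell_class_def Zn_periodic_def)
  then show ?thesis using chi by (auto simp: is_least_on_def)
qed

lemma cell_least_le_local_supersolution:
  fixes \<psi> chi v :: "'a::euclidean_space \<Rightarrow> real"
  assumes chi: "is_least_on UNIV (cell_class \<mu> \<psi>) chi" and psi: "Zn_periodic \<psi>"
    and T: "open T" "bounded T" and C: "closed C" "T \<subseteq> C"
    and v: "continuous_on C v" "lap_le_visc T \<mu> v"
    and above_psi: "\<And>y. y \<in> T \<Longrightarrow> \<psi> y \<le> v y"
    and boundary: "\<And>y. y \<in> C - T \<Longrightarrow> chi y \<le> v y"
    and y: "y \<in> T"
  shows "chi y \<le> v y"
proof -
  have chi_cont: "continuous_on UNIV chi" and chi_per: "Zn_periodic chi"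
    and chi_sup: "lap_le_visc UNIV \<mu> chi" and chi_psi: "\<And>x. \<psi> x \<le> chi x"
    and chi_min: "\<And>m x. m \<in> cell_class \<mu> \<psi> \<Longrightarrow> chi x \<le> m x"
    using chi by (auto simp: is_least_on_def cell_class_def)
  define W where "W = (\<lambda>y. if y \<in> T then min (v y) (chi y) else chi y)"
  obtain R where R: "\<And>y. y \<in> T \<Longrightarrow> norm y \<le> R" using T(2) by (auto simp: bounded_iff)
  have out: "W y = chi y" if "R < norm y" for y
  proof -
    have "y \<notin> T" using R[of y] that by linarith
    then show ?thesis by (simp add: W_def)
  qed
  have W_psi: "\<psi> x \<le> W x" for x using above_psi chi_psi by (simp add: W_def)
  have W_cont: "continuous_on UNIV W"
    unfolding W_def by (rule continuous_on_glue_min[OF C T(1) v(1) chi_cont boundary])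
  have W_sup: "lap_le_visc UNIV \<mu> W"
    unfolding W_def by (rule lap_le_visc_glue_min[OF chi_sup T(1) _ v(2)]) simp
  have "lattice_inf W \<in> cell_class \<mu> \<psi>"
    unfolding cell_class_def
  proof (intro CollectI conjI allI)
    show "continuous_on UNIV (lattice_inf W)"
      by (rule continuous_on_lattice_inf[OF chi_per out W_cont])
    show "Zn_periodic (lattice_inf W)" by (rule Zn_periodic_lattice_inf)
    show "lap_le_visc UNIV \<mu> (lattice_inf W)"
      by (rule lap_le_visc_lattice_inf[OF chi_per out W_sup])
    fix x
    obtain k where "k \<in> int_lattice" "lattice_inf W x = W (x + k)"
      using lattice_inf_attained[OF chi_per out] by blast
    then show "\<psi> x \<le> lattice_inf W x"
      using W_psi[of "x + k"] psi by (simp add: Zn_periodic_def)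
  qed
  then have "chi y \<le> lattice_inf W y" by (rule chi_min)
  also have "\<dots> \<le> W (y + 0)" by (rule lattice_inf_le[OF chi_per out zero_in_int_lattice])
  also have "\<dots> \<le> v y" using y by (simp add: W_def)
  finally show ?thesis .
qed

definition rescaled_gap :: "real \<Rightarrow> real \<Rightarrow> ('a::real_normed_vector \<Rightarrow> real) \<Rightarrow> ('a \<Rightarrow> real) \<Rightarrow> 'a \<Rightarrow> real"
  where "rescaled_gap \<epsilon> p u f y = \<epsilon> powr (- p) * (u (\<epsilon> *\<^sub>R y) - f (\<epsilon> *\<^sub>R y))"

lemma le_rescaled_gap_iff:
  "0 < \<epsilon> \<Longrightarrow> c \<le> rescaled_gap \<epsilon> p u f y \<longleftrightarrow> \<epsilon> powr p * c \<le> u (\<epsilon> *\<^sub>R y) - f (\<epsilon> *\<^sub>R y)"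
  by (simp add: rescaled_gap_def powr_minus_divide pos_le_divide_eq mult.commute)

lemma continuous_on_rescaled_gap:
  assumes "continuous_on (closure U) u" "continuous_on (closure U) f"
  shows "continuous_on {y. \<epsilon> *\<^sub>R y \<in> closure U} (rescaled_gap \<epsilon> p u f)"
proof -
  have "continuous_on {y. \<epsilon> *\<^sub>R y \<in> closure U} (\<lambda>y. u (\<epsilon> *\<^sub>R y))"
    by (rule continuous_on_compose2[OF assms(1)]) (auto intro!: continuous_intros)
  moreover have "continuous_on {y. \<epsilon> *\<^sub>R y \<in> closure U} (\<lambda>y. f (\<epsilon> *\<^sub>R y))"
    by (rule continuous_on_compose2[OF assms(2)]) (auto intro!: continuous_intros)
  ultimately show ?thesis
    unfolding rescaled_gap_def[abs_def] by (intro continuous_intros)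
qed

lemma lap_le_visc_rescaled_gap:
  fixes u f :: "'a::euclidean_space \<Rightarrow> real"
  assumes u: "lap_le_visc U 0 u" and f: "Ck_on 2 U f" and bound: "\<forall>x\<in>U. - lap f x \<le> M"
    and eps: "0 < \<epsilon>"
  shows "lap_le_visc {y. \<epsilon> *\<^sub>R y \<in> U} (M * \<epsilon> powr (2 - p)) (rescaled_gap \<epsilon> p u f)"
proof -
  have "lap_le_visc {y. \<epsilon> *\<^sub>R y + 0 \<in> U} (\<epsilon> powr (- p) * \<epsilon>\<^sup>2 * (0 + M))
          (\<lambda>y. \<epsilon> powr (- p) * (u (\<epsilon> *\<^sub>R y + 0) - f (\<epsilon> *\<^sub>R y + 0)))"
    by (rule lap_le_visc_affine[OF lap_le_visc_diff_C2[OF u f bound]]) (use eps in auto)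
  moreover have "\<epsilon> powr (- p) * \<epsilon>\<^sup>2 * M = M * \<epsilon> powr (2 - p)"
  proof -
    have "\<epsilon>\<^sup>2 = \<epsilon> powr 2" using eps by (simp add: powr_numeral)
    then show ?thesis by (simp add: powr_add[symmetric])
  qed
  ultimately show ?thesis
    unfolding rescaled_gap_def[abs_def] by (simp only: add_0_left add_0_right)
qed

lemma scaleR_preimage_domain:
  fixes U :: "'a::real_normed_vector set"
  assumes U: "open U" "bounded U" and eps: "0 < \<epsilon>"
  shows "open {y. \<epsilon> *\<^sub>R y \<in> U}" "bounded {y. \<epsilon> *\<^sub>R y \<in> U}"
    "closed {y. \<epsilon> *\<^sub>R y \<in> closure U}" "{y. \<epsilon> *\<^sub>R y \<in> U} \<subseteq> {y. \<epsilon> *\<^sub>R y \<in> closure U}"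
    "{y. \<epsilon> *\<^sub>R y \<in> closure U} - {y. \<epsilon> *\<^sub>R y \<in> U} = {y. \<epsilon> *\<^sub>R y \<in> frontier U}"
proof -
  show "open {y. \<epsilon> *\<^sub>R y \<in> U}" using open_affine_preimage[OF U(1), of \<epsilon> 0] by simp
  obtain B where "\<forall>x\<in>U. norm x \<le> B" using U(2) by (auto simp: bounded_iff)
  then have "\<forall>y\<in>{y. \<epsilon> *\<^sub>R y \<in> U}. norm y \<le> B / \<epsilon>" using eps by (auto simp: field_simps)
  then show "bounded {y. \<epsilon> *\<^sub>R y \<in> U}" by (auto simp: bounded_iff)
  show "closed {y. \<epsilon> *\<^sub>R y \<in> closure U}"
    by (intro closed_vimage[unfolded vimage_def] continuous_intros) auto
  show "{y. \<epsilon> *\<^sub>R y \<in> U} \<subseteq> {y. \<epsilon> *\<^sub>R y \<in> closure U}" using closure_subset by auto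
  show "{y. \<epsilon> *\<^sub>R y \<in> closure U} - {y. \<epsilon> *\<^sub>R y \<in> U} = {y. \<epsilon> *\<^sub>R y \<in> frontier U}"
    using U(1) by (auto simp: frontier_def interior_open)
qed

theorem lemma3p1:
  fixes U :: "'a::euclidean_space set"
    and \<phi>0 \<psi> u chi :: "'a \<Rightarrow> real"
    and lam p \<epsilon> :: real
  assumes U: "smooth_bounded_domain U"
    and phi0_C2: "Ck_on 2 U \<phi>0"
    and phi0_cont: "continuous_on (closure U) \<phi>0"
    and phi0_pos: "\<exists>x\<in>U. 0 < \<phi>0 x"
    and phi0_bdry: "\<forall>x\<in>frontier U. \<phi>0 x < 0"
    and lam: "0 < lam" "lam \<le> 1"
    and phi0_lap: "\<forall>x\<in>U. lam \<le> - lap \<phi>0 x \<and> - lap \<phi>0 x \<le> 1 / lam"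
    and psi_smooth: "smooth_on UNIV \<psi>"
    and psi_per: "Zn_periodic \<psi>"
    and psi_bounds: "\<forall>x. -1 \<le> \<psi> x \<and> \<psi> x \<le> 0"
    and eps: "0 < \<epsilon>"
    and u_least: "is_least_on (closure U)
                    (obst_class U (\<lambda>x. \<phi>0 x + \<epsilon> powr p * \<psi> ((1 / \<epsilon>) *\<^sub>R x))) u"
    and chi_least: "is_least_on UNIV (cell_class ((1 / lam) * \<epsilon> powr (2 - p)) \<psi>) chi"
  shows "\<forall>x\<in>U. \<epsilon> powr p * chi ((1 / \<epsilon>) *\<^sub>R x) \<le> u x - \<phi>0 x"
proof -
  \<comment> \<open>Only the upper bound on \<open>-\<Delta>\<phi>0\<close> and \<open>\<psi> \<le> 0\<close> matter for this one-sided estimate.\<close>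
  have U_open: "open U" and U_bounded: "bounded U" using U by (auto simp: smooth_bounded_domain_def)
  have u_cont: "continuous_on (closure U) u" and u_sup: "lap_le_visc U 0 u"
    and u_obst: "\<forall>x\<in>U. \<phi>0 x + \<epsilon> powr p * \<psi> ((1 / \<epsilon>) *\<^sub>R x) \<le> u x"
    and u_bdry: "\<forall>x\<in>frontier U. 0 \<le> u x"
    using u_least by (auto simp: is_least_on_def obst_class_def)
  note domain = scaleR_preimage_domain[OF U_open U_bounded eps]
  have chi_le_gap: "chi y \<le> rescaled_gap \<epsilon> p u \<phi>0 y" if "\<epsilon> *\<^sub>R y \<in> U" for y
  proof (rule cell_least_le_local_supersolution[OF chi_least psi_per domain(1-4)
        continuous_on_rescaled_gap[OF u_cont phi0_cont]])
    show "lap_le_visc {y. \<epsilon> *\<^sub>R y \<in> U} ((1 / lam) * \<epsilon> powr (2 - p)) (rescaled_gap \<epsilon> p u \<phi>0)"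
      by (rule lap_le_visc_rescaled_gap[OF u_sup phi0_C2 _ eps]) (use phi0_lap in auto)
    show "\<psi> z \<le> rescaled_gap \<epsilon> p u \<phi>0 z" if "z \<in> {y. \<epsilon> *\<^sub>R y \<in> U}" for z
      using u_obst that eps by (auto simp: le_rescaled_gap_iff)
    show "chi z \<le> rescaled_gap \<epsilon> p u \<phi>0 z"
      if "z \<in> {y. \<epsilon> *\<^sub>R y \<in> closure U} - {y. \<epsilon> *\<^sub>R y \<in> U}" for z
    proof -
      have "chi z \<le> 0" using cell_least_nonpos[OF chi_least] lam eps psi_bounds by simp
      then have "\<epsilon> powr p * chi z \<le> 0" by (simp add: mult_nonneg_nonpos)
      moreover have "0 < u (\<epsilon> *\<^sub>R z) - \<phi>0 (\<epsilon> *\<^sub>R z)"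
        using that u_bdry phi0_bdry unfolding domain(5) by force
      ultimately show ?thesis using eps by (simp add: le_rescaled_gap_iff)
    qed
  qed (use that in simp)
  show ?thesis
    using chi_le_gap[of "(1 / \<epsilon>) *\<^sub>R x" for x] eps by (simp add: le_rescaled_gap_iff)
qed

end
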